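(* For a tree $T$ of order $n$, the following statements are equivalent: (a) $\mathrm{diss}(T)=\frac{2n}{3}$; (b) $T\in\mathcal{T}$; (c) $n\equiv 0 \pmod 3$, and for every vertex $y$ of $T$, at most two components of $T-y$ have order not congruent to $0$ modulo $3$.
   Context: A set $D$ of vertices of a graph $G$ is a dissociation set if the induced subgraph $G[D]$ has maximum degree at most $1$; $\mathrm{diss}(G)$ is the maximum cardinality of a dissociation set of $G$. Operation $(O_1)$ applied to a graph $G'$: add three new vertices $u,v,w$ with edges $uv$, $vw$, and one edge from $w$ to some vertex of $G'$ (i.e., attach a new path $P_3$ by an edge at one of its endvertices). Operation $(O_2)$ applied to $G'$: add three new vertices $v,u,u'$ with edges $vu$, $vu'$, and one edge from $v$ to some vertex of $G'$ (i.e., attach a new $P_3$ by an edge at its central vertex). $\mathcal{T}$ is the set of all trees obtained from the path $P_3$ on three vertices by finitely many (possibly zero) applications of $(O_1)$ and $(O_2)$. *)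

theory Defs
  imports Complex_Main
begin

definition graph :: "'a set \<Rightarrow> 'a set set \<Rightarrow> bool" where
  "graph V E \<longleftrightarrow> finite V \<and> (\<forall>e\<in>E. \<exists>a b. e = {a, b} \<and> a \<noteq> b \<and> a \<in> V \<and> b \<in> V)"

definition reach_in :: "'a set set \<Rightarrow> 'a set \<Rightarrow> 'a \<Rightarrow> 'a \<Rightarrow> bool" where
  "reach_in E S = (\<lambda>a b. a \<in> S \<and> b \<in> S \<and> {a, b} \<in> E)\<^sup>*\<^sup>*"

definition connected_graph :: "'a set \<Rightarrow> 'a set set \<Rightarrow> bool" where
  "connected_graph V E \<longleftrightarrow> V \<noteq> {} \<and> (\<forall>a\<in>V. \<forall>b\<in>V. reach_in E V a b)"

definition is_cycle :: "'a set \<Rightarrow> 'a set set \<Rightarrow> 'a list \<Rightarrow> bool" where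
  "is_cycle V E cs \<longleftrightarrow> length cs \<ge> 3 \<and> distinct cs \<and> set cs \<subseteq> V \<and>
     (\<forall>i. Suc i < length cs \<longrightarrow> {cs ! i, cs ! Suc i} \<in> E) \<and> {last cs, hd cs} \<in> E"

definition acyclic_graph :: "'a set \<Rightarrow> 'a set set \<Rightarrow> bool" where
  "acyclic_graph V E \<longleftrightarrow> (\<nexists>cs. is_cycle V E cs)"

definition tree :: "'a set \<Rightarrow> 'a set set \<Rightarrow> bool" where
  "tree V E \<longleftrightarrow> graph V E \<and> connected_graph V E \<and> acyclic_graph V E"

definition dissociation_set :: "'a set \<Rightarrow> 'a set set \<Rightarrow> 'a set \<Rightarrow> bool" where
  "dissociation_set V E D \<longleftrightarrow> D \<subseteq> V \<and> (\<forall>v\<in>D. card {u\<in>D. {u, v} \<in> E} \<le> 1)"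

definition diss :: "'a set \<Rightarrow> 'a set set \<Rightarrow> nat" where
  "diss V E = Max {card D | D. dissociation_set V E D}"

definition components_minus :: "'a set \<Rightarrow> 'a set set \<Rightarrow> 'a \<Rightarrow> 'a set set" where
  "components_minus V E y =
     (\<lambda>x. {z. reach_in E (V - {y}) x z}) ` (V - {y})"

inductive_set calT :: "('a set \<times> 'a set set) set" where
  P3: "\<lbrakk>a \<noteq> b; b \<noteq> c; a \<noteq> c\<rbrakk> \<Longrightarrow> ({a, b, c}, {{a, b}, {b, c}}) \<in> calT"
| O1: "\<lbrakk>(V, E) \<in> calT; u \<notin> V; v \<notin> V; w \<notin> V; u \<noteq> v; v \<noteq> w; u \<noteq> w; x \<in> V\<rbrakk>
       \<Longrightarrow> (V \<union> {u, v, w}, E \<union> {{u, v}, {v, w}, {w, x}}) \<in> calT"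
| O2: "\<lbrakk>(V, E) \<in> calT; v \<notin> V; u \<notin> V; u' \<notin> V; v \<noteq> u; v \<noteq> u'; u \<noteq> u'; x \<in> V\<rbrakk>
       \<Longrightarrow> (V \<union> {v, u, u'}, E \<union> {{v, u}, {v, u'}, {v, x}}) \<in> calT"

end

theory Submission
  imports Defs
begin

text \<open>Every forest of order \<open>n\<close> has a dissociation set of size at least \<open>2n/3\<close>: near the end of a
  longest path there is a small vertex set \<open>X\<close> with a dissociation set \<open>Y \<subseteq> X\<close>,
  \<open>3 |Y| \<ge> 2 |X|\<close>, and no edges between \<open>Y\<close> and the rest of the forest, so induction on the forest
  without \<open>X\<close> applies. Each of \<open>(O\<^sub>1)\<close> and \<open>(O\<^sub>2)\<close> adds three vertices and raises the dissociation
  number by exactly two, whence (b) \<open>\<Longrightarrow>\<close> (a). For (a) \<open>\<Longrightarrow>\<close> (c) apply the bound to every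
  component of \<open>T - y\<close>: a component whose order is not divisible by 3 contributes strictly more
  than two thirds of its order, so three of them would push \<open>diss T\<close> above \<open>2n/3\<close>. For
  (c) \<open>\<Longrightarrow>\<close> (b), the end of a longest path shows that a tree satisfying (c) is a \<open>P\<^sub>3\<close> or carries a
  pendant \<open>P\<^sub>3\<close> attached by an end or by its centre; deleting it preserves (c), and the
  corresponding operation rebuilds the tree from the smaller one.\<close>

section \<open>Neighbourhoods and longest paths\<close>

definition neighbours :: "'a set set \<Rightarrow> 'a set \<Rightarrow> 'a \<Rightarrow> 'a set" where
  "neighbours E S v = {u \<in> S. {u, v} \<in> E}"

definition loop_free :: "'a set set \<Rightarrow> bool" where
  "loop_free E \<longleftrightarrow> (\<forall>v. {v} \<notin> E)"

definition is_path :: "'a set set \<Rightarrow> 'a set \<Rightarrow> 'a list \<Rightarrow> bool" where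
  "is_path E S cs \<longleftrightarrow> distinct cs \<and> set cs \<subseteq> S \<and> (\<forall>i. Suc i < length cs \<longrightarrow> {cs ! i, cs ! Suc i} \<in> E)"

definition longest_path :: "'a set set \<Rightarrow> 'a set \<Rightarrow> 'a list \<Rightarrow> bool" where
  "longest_path E S cs \<longleftrightarrow> is_path E S cs \<and> (\<forall>cs'. is_path E S cs' \<longrightarrow> length cs' \<le> length cs)"

lemma neighbours_sym: "u \<in> neighbours E S v \<Longrightarrow> v \<in> S \<Longrightarrow> v \<in> neighbours E S u"
  by (auto simp: neighbours_def insert_commute)

lemma neighbours_subset: "neighbours E S v \<subseteq> S"
  by (auto simp: neighbours_def)

lemma loop_free_not_neighbour: "loop_free E \<Longrightarrow> v \<notin> neighbours E S v"
  by (simp add: neighbours_def loop_free_def)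

lemma graph_loop_free: "graph V E \<Longrightarrow> loop_free E"
  by (fastforce simp: graph_def loop_free_def doubleton_eq_iff)

lemma acyclic_graph_mono: "acyclic_graph S E \<Longrightarrow> T \<subseteq> S \<Longrightarrow> acyclic_graph T E"
  by (auto simp: acyclic_graph_def is_cycle_def)

lemma is_path_Nil [simp]: "is_path E S []"
  by (simp add: is_path_def)

lemma is_path_Cons:
  "is_path E S (a # cs) \<longleftrightarrow> a \<in> S \<and> a \<notin> set cs \<and> is_path E S cs \<and> (cs \<noteq> [] \<longrightarrow> {a, hd cs} \<in> E)"
  by (auto simp: is_path_def hd_conv_nth nth_Cons split: nat.splits)

lemma acyclic_path_no_chord:
  assumes path: "is_path E S cs" and acyclic: "acyclic_graph S E"
    and ij: "i < j" "j < length cs" and chord: "{cs ! i, cs ! j} \<in> E"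
  shows "j = Suc i"
proof (rule ccontr)
  assume "j \<noteq> Suc i"
  define c where "c = take (j - i + 1) (drop i cs)"
  have len: "length c = j - i + 1" and nth: "\<And>k. k \<le> j - i \<Longrightarrow> c ! k = cs ! (i + k)"
    using ij by (auto simp: c_def)
  have "is_cycle S E c"
    unfolding is_cycle_def
  proof (intro conjI allI impI)
    show "3 \<le> length c" using len ij \<open>j \<noteq> Suc i\<close> by simp
    show "distinct c" "set c \<subseteq> S"
      using path by (auto simp: c_def is_path_def dest: in_set_takeD in_set_dropD)
    fix k assume "Suc k < length c"
    then show "{c ! k, c ! Suc k} \<in> E" using nth len ij path by (simp add: is_path_def)
  next
    have "c \<noteq> []" using len by auto
    then have "last c = c ! (j - i)" "hd c = c ! 0" using len by (simp_all add: last_conv_nth hd_conv_nth)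
    then have "last c = cs ! j" "hd c = cs ! i" using nth ij by simp_all
    then show "{last c, hd c} \<in> E" using chord by (simp add: insert_commute)
  qed
  with acyclic show False by (auto simp: acyclic_graph_def)
qed

lemma acyclic_path_adjacent:
  assumes "is_path E S cs" "acyclic_graph S E" "loop_free E"
    and "i < length cs" "j < length cs" "{cs ! i, cs ! j} \<in> E"
  shows "j = Suc i \<or> i = Suc j"
  using assms acyclic_path_no_chord[of E S cs i j] acyclic_path_no_chord[of E S cs j i]
  by (cases i j rule: linorder_cases) (auto simp: loop_free_def insert_commute)

lemma longest_path_exists:
  assumes "finite S" "S \<noteq> {}"
  obtains a cs where "longest_path E S (a # cs)"
proof -
  obtain a where "a \<in> S" using assms by auto
  then have single: "is_path E S [a]" by (simp add: is_path_Cons)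
  have "\<forall>cs. is_path E S cs \<longrightarrow> length cs < Suc (card S)"
    using assms(1) by (metis card_mono distinct_card is_path_def less_Suc_eq_le)
  then obtain cs where cs: "is_path E S cs" "\<forall>cs'. is_path E S cs' \<longrightarrow> length cs' \<le> length cs"
    using ex_has_greatest_nat[of "is_path E S" "[a]" length "Suc (card S)"] single by blast
  moreover have "cs \<noteq> []" using cs(2)[rule_format, OF single] by auto
  ultimately show thesis using that by (cases cs) (simp_all add: longest_path_def)
qed

lemma longest_path_same_length:
  "longest_path E S cs \<Longrightarrow> is_path E S cs' \<Longrightarrow> length cs' = length cs \<Longrightarrow> longest_path E S cs'"
  by (simp add: longest_path_def)

text \<open>An end of a longest path in an acyclic graph is a leaf: a further neighbour would either
  extend the path or close a cycle.\<close>

lemma longest_path_start_neighbour: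
  assumes longest: "longest_path E S (a # cs)" and "acyclic_graph S E" "loop_free E"
    and u: "u \<in> neighbours E S a"
  shows "cs \<noteq> [] \<and> u = hd cs"
proof -
  have path: "is_path E S (a # cs)" using longest by (simp add: longest_path_def)
  have "u \<in> set (a # cs)"
  proof (rule ccontr)
    assume "u \<notin> set (a # cs)"
    then have "is_path E S (u # a # cs)" using path u by (auto simp: is_path_Cons neighbours_def)
    with longest show False by (auto simp: longest_path_def dest: spec[of _ "u # a # cs"])
  qed
  then obtain j where j: "j < length (a # cs)" "(a # cs) ! j = u" by (metis in_set_conv_nth)
  moreover have "{(a # cs) ! 0, (a # cs) ! j} \<in> E"
    using u j by (simp add: neighbours_def insert_commute)
  ultimately have "j = Suc 0"
    using acyclic_path_adjacent[OF path assms(2,3), of 0 j] by simp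
  with j show ?thesis by (cases cs) auto
qed

lemma longest_path_start_leaf:
  assumes "longest_path E S (a # b # cs)" "acyclic_graph S E" "loop_free E"
  shows "neighbours E S a = {b}"
proof -
  have "is_path E S (a # b # cs)" using assms(1) by (simp add: longest_path_def)
  then have "{b, a} \<in> E" "b \<in> S" by (simp_all add: is_path_Cons insert_commute)
  then have "b \<in> neighbours E S a" by (simp add: neighbours_def)
  moreover have "u = b" if "u \<in> neighbours E S a" for u
    using longest_path_start_neighbour[OF assms that] by simp
  ultimately show ?thesis by blast
qed

lemma longest_path_second_vertex_leaves:
  assumes longest: "longest_path E S (a # b # cs)" and acyclic: "acyclic_graph S E" and lf: "loop_free E"
    and u: "u \<in> neighbours E S b - set (take 1 cs)"
  shows "neighbours E S u = {b}"
proof -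
  have path: "is_path E S (a # b # cs)" using longest by (simp add: longest_path_def)
  have "u \<notin> set (b # cs)"
  proof
    assume "u \<in> set (b # cs)"
    then obtain j where j: "j < length (b # cs)" "(b # cs) ! j = u" by (metis in_set_conv_nth)
    moreover have "{(a # b # cs) ! 1, (a # b # cs) ! Suc j} \<in> E"
      using u j by (simp add: neighbours_def insert_commute)
    ultimately have "j = 1"
      using acyclic_path_adjacent[OF path acyclic lf, of 1 "Suc j"] by simp
    with j u show False by (cases cs) auto
  qed
  with path u have "is_path E S (u # b # cs)"
    by (auto simp: is_path_Cons neighbours_def insert_commute)
  then have "longest_path E S (u # b # cs)" using longest_path_same_length[OF longest] by simp
  from longest_path_start_leaf[OF this acyclic lf] show ?thesis .
qed

lemma longest_path_second_vertex:
  assumes longest: "longest_path E S (a # b # cs)" and acyclic: "acyclic_graph S E" and lf: "loop_free E"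
  defines "L \<equiv> neighbours E S b - set (take 1 cs)"
  shows "a \<in> L" "b \<notin> L" "L \<subseteq> S" "\<forall>u\<in>L. neighbours E S u = {b}"
proof -
  have "is_path E S (a # b # cs)" using longest by (simp add: longest_path_def)
  then have "a \<in> S" "{a, b} \<in> E" "a \<notin> set cs" by (simp_all add: is_path_Cons)
  moreover have "a \<notin> set (take 1 cs)" using \<open>a \<notin> set cs\<close> by (meson in_set_takeD)
  ultimately show "a \<in> L" by (simp add: L_def neighbours_def)
  show "b \<notin> L" using loop_free_not_neighbour[OF lf] by (simp add: L_def)
  show "L \<subseteq> S" using neighbours_subset[of E S b] unfolding L_def by blast
  show "\<forall>u\<in>L. neighbours E S u = {b}"
    using longest_path_second_vertex_leaves[OF longest acyclic lf] by (simp add: L_def)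
qed

lemma longest_path_third_vertex_leaves:
  assumes longest: "longest_path E S (a # b # c # cs)" and acyclic: "acyclic_graph S E" and lf: "loop_free E"
    and w: "w \<in> neighbours E S c - {b} - set (take 1 cs)"
    and z: "z \<in> neighbours E S w - {c}"
  shows "neighbours E S z = {w}"
proof -
  have path: "is_path E S (a # b # c # cs)" using longest by (simp add: longest_path_def)
  have "w \<notin> set (c # cs)"
  proof
    assume "w \<in> set (c # cs)"
    then obtain j where j: "j < length (c # cs)" "(c # cs) ! j = w" by (metis in_set_conv_nth)
    moreover have "{(a # b # c # cs) ! 2, (a # b # c # cs) ! Suc (Suc j)} \<in> E"
      using w j by (simp add: neighbours_def insert_commute numeral_2_eq_2)
    ultimately have "j = 1"
      using acyclic_path_adjacent[OF path acyclic lf, of 2 "Suc (Suc j)"] by simp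
    with j w show False by (cases cs) auto
  qed
  with path w have path': "is_path E S (w # c # cs)"
    by (auto simp: is_path_Cons neighbours_def insert_commute)
  have "z \<notin> set (w # c # cs)"
  proof
    assume "z \<in> set (w # c # cs)"
    then obtain j where j: "j < length (w # c # cs)" "(w # c # cs) ! j = z" by (metis in_set_conv_nth)
    moreover have "{(w # c # cs) ! 0, (w # c # cs) ! j} \<in> E"
      using z j by (simp add: neighbours_def insert_commute)
    ultimately have "j = 1"
      using acyclic_path_adjacent[OF path' acyclic lf, of 0 j] by simp
    with j z show False by simp
  qed
  with path' z have "is_path E S (z # w # c # cs)"
    by (auto simp: is_path_Cons neighbours_def insert_commute)
  then have "longest_path E S (z # w # c # cs)" using longest_path_same_length[OF longest] by simp
  from longest_path_start_leaf[OF this acyclic lf] show ?thesis .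
qed

section \<open>Dissociation sets\<close>

lemma card_le_one_if_subset_singleton: "A \<subseteq> {x} \<Longrightarrow> card A \<le> 1"
  by (auto dest: subset_singletonD)

lemma dissociation_set_iff:
  "dissociation_set V E D \<longleftrightarrow> D \<subseteq> V \<and> (\<forall>v\<in>D. card (neighbours E D v) \<le> 1)"
  by (simp add: dissociation_set_def neighbours_def)

lemma dissociation_set_finite: "finite V \<Longrightarrow> dissociation_set V E D \<Longrightarrow> finite D"
  by (auto simp: dissociation_set_def intro: finite_subset)

lemma dissociation_set_mono_vertices: "dissociation_set V E D \<Longrightarrow> V \<subseteq> W \<Longrightarrow> dissociation_set W E D"
  by (auto simp: dissociation_set_def)

lemma dissociation_set_cong_edges:
  assumes "\<And>u v. u \<in> D \<Longrightarrow> v \<in> D \<Longrightarrow> {u, v} \<in> E \<longleftrightarrow> {u, v} \<in> E'"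
  shows "dissociation_set V E D \<longleftrightarrow> dissociation_set V E' D"
proof -
  have "neighbours E D v = neighbours E' D v" if "v \<in> D" for v
    using assms that by (auto simp: neighbours_def)
  then show ?thesis by (simp add: dissociation_set_iff)
qed

lemma dissociation_set_restrict:
  assumes D: "dissociation_set W E' D" and "finite D" "E \<subseteq> E'"
  shows "dissociation_set V E (D \<inter> V)"
  unfolding dissociation_set_iff
proof (intro conjI ballI)
  fix v assume v: "v \<in> D \<inter> V"
  have "card (neighbours E (D \<inter> V) v) \<le> card (neighbours E' D v)"
    using assms(2,3) by (intro card_mono) (auto simp: neighbours_def)
  also have "\<dots> \<le> 1" using D v by (simp add: dissociation_set_iff)
  finally show "card (neighbours E (D \<inter> V) v) \<le> 1" .
qed auto

lemma dissociation_set_Un: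
  assumes D: "dissociation_set A E D" and Y: "dissociation_set B E Y"
    and no_edges: "\<forall>p\<in>Y. \<forall>q\<in>A. {p, q} \<notin> E"
  shows "dissociation_set (A \<union> B) E (D \<union> Y)"
  unfolding dissociation_set_iff
proof (intro conjI ballI)
  have DA: "D \<subseteq> A" and YB: "Y \<subseteq> B" using D Y by (simp_all add: dissociation_set_iff)
  then show "D \<union> Y \<subseteq> A \<union> B" by blast
  fix v assume v: "v \<in> D \<union> Y"
  show "card (neighbours E (D \<union> Y) v) \<le> 1"
  proof (cases "v \<in> Y")
    case True
    with no_edges DA have "neighbours E (D \<union> Y) v = neighbours E Y v"
      by (auto simp: neighbours_def) (metis insert_commute subsetD)
    then show ?thesis using Y True by (simp add: dissociation_set_iff)
  next
    case False
    with v have "v \<in> D" by simp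
    with no_edges DA have "neighbours E (D \<union> Y) v = neighbours E D v"
      by (auto simp: neighbours_def)
    then show ?thesis using D \<open>v \<in> D\<close> by (simp add: dissociation_set_iff)
  qed
qed

lemma dissociation_set_doubleton:
  assumes "p \<in> V" "q \<in> V" "{p} \<notin> E" "{q} \<notin> E"
  shows "dissociation_set V E {p, q}"
  unfolding dissociation_set_iff
proof (intro conjI ballI)
  fix v assume "v \<in> {p, q}"
  then have "neighbours E {p, q} v \<subseteq> {if v = p then q else p}"
    using assms(3,4) by (auto simp: neighbours_def)
  then show "card (neighbours E {p, q} v) \<le> 1" by (rule card_le_one_if_subset_singleton)
qed (use assms in auto)

lemma finite_dissociation_set_cards: "finite V \<Longrightarrow> finite {card D | D. dissociation_set V E D}"
  by (rule finite_subset[of _ "card ` Pow V"]) (auto simp: dissociation_set_def)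

lemma card_le_diss: "finite V \<Longrightarrow> dissociation_set V E D \<Longrightarrow> card D \<le> diss V E"
  unfolding diss_def by (rule Max_ge) (auto simp: finite_dissociation_set_cards)

lemma diss_attained:
  assumes "finite V"
  obtains D where "dissociation_set V E D" "card D = diss V E"
proof -
  have "dissociation_set V E {}" by (simp add: dissociation_set_def)
  then have "{card D | D. dissociation_set V E D} \<noteq> {}" by blast
  from Max_in[OF finite_dissociation_set_cards[OF assms] this] that show thesis
    unfolding diss_def by auto
qed

text \<open>Near the leaf end \<open>a b \<dots>\<close> of a longest path we find a set \<open>X\<close>, joined to the rest of the
  graph only through vertices outside a dissociation set \<open>Y \<subseteq> X\<close> with \<open>2 |X| \<le> 3 |Y|\<close>: either the
  star formed by \<open>b\<close> and at least two pendant leaves (\<open>Y\<close> the leaves), or the first two or three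
  vertices of the path (\<open>Y = {a, b}\<close>).\<close>

lemma longest_path_dense_piece:
  assumes fin: "finite S" and longest: "longest_path E S (a # b # cs)"
    and acyclic: "acyclic_graph S E" and lf: "loop_free E"
  obtains X Y where "Y \<subseteq> X" "X \<subseteq> S" "X \<noteq> {}" "dissociation_set Y E Y"
    "\<forall>p\<in>Y. \<forall>q\<in>S - X. {p, q} \<notin> E" "2 * card X \<le> 3 * card Y"
proof -
  define L where "L = neighbours E S b - set (take 1 cs)"
  note L = longest_path_second_vertex[OF longest acyclic lf, folded L_def]
  have path: "is_path E S (a # b # cs)" using longest by (simp add: longest_path_def)
  then have aS: "a \<in> S" and bS: "b \<in> S" and "a \<noteq> b" by (simp_all add: is_path_Cons)
  have finL: "finite L" using L(3) fin by (rule finite_subset)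
  show thesis
  proof (cases "2 \<le> card L")
    case True
    have "neighbours E L v = {}" if "v \<in> L" for v
      using L(4)[rule_format, OF that] L(2,3) by (auto simp: neighbours_def)
    then have "dissociation_set L E L" by (simp add: dissociation_set_iff)
    moreover have "{p, q} \<notin> E" if "p \<in> L" "q \<in> S - insert b L" for p q
    proof
      assume "{p, q} \<in> E"
      then have "q \<in> neighbours E S p" using that(2) by (simp add: neighbours_def insert_commute)
      with L(4) that show False by simp
    qed
    moreover have "2 * card (insert b L) \<le> 3 * card L" using True L(2) finL by simp
    ultimately show thesis using L(3) bS by (intro that[of L "insert b L"]) auto
  next
    case False
    have "0 < card L" using L(1) finL by (auto simp: card_gt_0_iff)
    with False have "card L = 1" by linarith
    then have "L = {a}" using L(1) by (auto simp: card_1_singleton_iff)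
    then have nb_b: "neighbours E S b \<subseteq> {a} \<union> set (take 1 cs)" by (auto simp: L_def)
    have nb_a: "neighbours E S a = {b}" by (rule longest_path_start_leaf[OF longest acyclic lf])
    define X where "X = {a, b} \<union> set (take 1 cs)"
    have XS: "X \<subseteq> S" using aS bS path unfolding X_def is_path_def by (auto dest: in_set_takeD)
    have "{p, q} \<notin> E" if "p \<in> {a, b}" "q \<in> S - X" for p q
    proof
      assume "{p, q} \<in> E"
      then have "q \<in> neighbours E S p" using that(2) by (simp add: neighbours_def insert_commute)
      with that nb_a nb_b show False by (auto simp: X_def)
    qed
    moreover have "dissociation_set {a, b} E {a, b}"
      using lf by (intro dissociation_set_doubleton) (simp_all add: loop_free_def)
    moreover have "card X \<le> 3"
    proof -
      have "card X \<le> card {a, b} + card (set (take 1 cs))" unfolding X_def by (rule card_Un_le)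
      also have "\<dots> \<le> 2 + 1"
        by (intro add_mono card_insert_le_m1) (auto simp: card_length[of "take 1 cs", simplified])
      finally show ?thesis by simp
    qed
    moreover have "card {a, b} = 2" using \<open>a \<noteq> b\<close> by simp
    ultimately show thesis using XS by (intro that[of "{a, b}" X]) (auto simp: X_def)
  qed
qed

lemma acyclic_graph_dense_piece:
  assumes fin: "finite S" and ne: "S \<noteq> {}" and acyclic: "acyclic_graph S E" and lf: "loop_free E"
  obtains X Y where "Y \<subseteq> X" "X \<subseteq> S" "X \<noteq> {}" "dissociation_set Y E Y"
    "\<forall>p\<in>Y. \<forall>q\<in>S - X. {p, q} \<notin> E" "2 * card X \<le> 3 * card Y"
proof -
  obtain a cs where longest: "longest_path E S (a # cs)" using longest_path_exists[OF fin ne] .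
  show thesis
  proof (cases cs)
    case Nil
    have "{a, q} \<notin> E" if "q \<in> S" for q
    proof
      assume "{a, q} \<in> E"
      then have "q \<in> neighbours E S a" using that by (simp add: neighbours_def insert_commute)
      from longest_path_start_neighbour[OF longest acyclic lf this] Nil show False by simp
    qed
    moreover have "dissociation_set {a} E {a}"
      using dissociation_set_doubleton[of a "{a}" a E] lf by (simp add: loop_free_def)
    moreover have "a \<in> S" using longest by (simp add: longest_path_def is_path_Cons)
    ultimately show thesis by (intro that[of "{a}" "{a}"]) auto
  next
    case (Cons b cs')
    show thesis
      using longest_path_dense_piece[OF fin longest[unfolded Cons] acyclic lf] that .
  qed
qed

theorem acyclic_graph_large_dissociation_set:
  assumes "finite S" "acyclic_graph S E" "loop_free E"
  shows "\<exists>D. dissociation_set S E D \<and> 2 * card S \<le> 3 * card D"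
  using assms
proof (induction "card S" arbitrary: S rule: less_induct)
  case less
  show ?case
  proof (cases "S = {}")
    case True
    then show ?thesis by (simp add: dissociation_set_def)
  next
    case False
    obtain X Y where XY: "Y \<subseteq> X" "X \<subseteq> S" "X \<noteq> {}" "dissociation_set Y E Y"
      "\<forall>p\<in>Y. \<forall>q\<in>S - X. {p, q} \<notin> E" "2 * card X \<le> 3 * card Y"
      using acyclic_graph_dense_piece[OF less.prems(1) False less.prems(2,3)] .
    have finX: "finite X" using XY(2) less.prems(1) by (rule finite_subset)
    have "card (S - X) < card S"
      using XY(2,3) less.prems(1) by (intro psubset_card_mono) auto
    moreover have "acyclic_graph (S - X) E" using less.prems(2) by (rule acyclic_graph_mono) blast
    ultimately have "\<exists>D. dissociation_set (S - X) E D \<and> 2 * card (S - X) \<le> 3 * card D"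
      using less.prems(1,3) by (intro less.hyps) simp_all
    then obtain D where D: "dissociation_set (S - X) E D" "2 * card (S - X) \<le> 3 * card D"
      by blast
    have "dissociation_set ((S - X) \<union> X) E (D \<union> Y)"
      by (rule dissociation_set_Un[OF D(1) dissociation_set_mono_vertices[OF XY(4,1)] XY(5)])
    moreover have "(S - X) \<union> X = S" using XY(2) by blast
    ultimately have "dissociation_set S E (D \<union> Y)" by simp
    moreover have "card (D \<union> Y) = card D + card Y"
    proof (rule card_Un_disjoint)
      show "finite D" using less.prems(1) D(1) by (blast intro: dissociation_set_finite finite_Diff)
      show "finite Y" using XY(1) finX by (rule finite_subset)
      show "D \<inter> Y = {}" using D(1) XY(1) by (auto simp: dissociation_set_def)
    qed
    moreover have "card S = card (S - X) + card X"
      using XY(2) less.prems(1) by (simp add: card_Diff_subset card_mono finX)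
    ultimately show ?thesis using D(2) XY(6) by (intro exI[of _ "D \<union> Y"]) linarith
  qed
qed

section \<open>Trees in \<open>\<T>\<close> attain the bound\<close>

lemma calT_finite_edges: "(V, E) \<in> calT \<Longrightarrow> finite V \<and> (\<forall>e\<in>E. e \<subseteq> V)"
  by (induction rule: calT.induct) auto

lemma diss_Un_le:
  assumes "finite V" "finite P"
  shows "diss (V \<union> P) (E \<union> N) \<le> diss V E + diss P N"
proof -
  have fin: "finite (V \<union> P)" using assms by simp
  then obtain D where D: "dissociation_set (V \<union> P) (E \<union> N) D" "card D = diss (V \<union> P) (E \<union> N)"
    by (rule diss_attained)
  have finD: "finite D" using fin D(1) by (rule dissociation_set_finite)
  have "D = (D \<inter> V) \<union> (D \<inter> P)" using D(1) by (auto simp: dissociation_set_def)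
  then have "card D \<le> card (D \<inter> V) + card (D \<inter> P)" by (metis card_Un_le)
  also have "card (D \<inter> V) \<le> diss V E"
    using dissociation_set_restrict[OF D(1) finD, of E V] assms(1) by (simp add: card_le_diss)
  also have "card (D \<inter> P) \<le> diss P N"
    using dissociation_set_restrict[OF D(1) finD, of N P] assms(2) by (simp add: card_le_diss)
  finally show ?thesis using D(2) by simp
qed

lemma diss_Un_ge:
  assumes fin: "finite V" "finite P" and E: "\<forall>e\<in>E. e \<subseteq> V" and N: "\<forall>e\<in>N. \<not> e \<subseteq> V"
    and disj: "V \<inter> P = {}" and Y: "dissociation_set P N Y" and no_edges: "\<forall>p\<in>Y. \<forall>q\<in>V. {p, q} \<notin> N"
  shows "diss V E + card Y \<le> diss (V \<union> P) (E \<union> N)"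
proof -
  obtain D where D: "dissociation_set V E D" "card D = diss V E"
    using fin(1) by (rule diss_attained)
  have DV: "D \<subseteq> V" and YP: "Y \<subseteq> P" using D(1) Y by (simp_all add: dissociation_set_def)
  have "dissociation_set V (E \<union> N) D"
    using D(1) N DV by (subst dissociation_set_cong_edges[of D _ E]) auto
  moreover have "{p, q} \<notin> E" if "p \<in> Y" for p q
    using E YP disj that by blast
  then have "dissociation_set P (E \<union> N) Y"
    using Y by (subst dissociation_set_cong_edges[of Y _ N]) auto
  moreover have "\<forall>p\<in>Y. \<forall>q\<in>V. {p, q} \<notin> E \<union> N" using no_edges E YP disj by blast
  ultimately have "dissociation_set (V \<union> P) (E \<union> N) (D \<union> Y)" by (rule dissociation_set_Un)
  then have "card (D \<union> Y) \<le> diss (V \<union> P) (E \<union> N)" using fin by (simp add: card_le_diss)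
  moreover have "card (D \<union> Y) = card D + card Y"
    using DV YP disj fin by (meson card_Un_disjoint disjoint_iff finite_subset subsetD)
  ultimately show ?thesis using D(2) by simp
qed

lemma diss_path3_le:
  assumes "u \<noteq> w" "{u, v} \<in> N" "{v, w} \<in> N"
  shows "diss {u, v, w} N \<le> 2"
proof -
  obtain D where D: "dissociation_set {u, v, w} N D" "card D = diss {u, v, w} N"
    by (rule diss_attained[of "{u, v, w}" N]) simp
  have "D \<noteq> {u, v, w}"
  proof
    assume "D = {u, v, w}"
    then have "{u, w} \<subseteq> neighbours N D v" using assms(2,3) by (auto simp: neighbours_def insert_commute)
    then have "card {u, w} \<le> card (neighbours N D v)" by (rule card_mono[rotated]) (simp add: neighbours_def \<open>D = {u, v, w}\<close>)
    with D(1) \<open>D = {u, v, w}\<close> assms(1) show False by (simp add: dissociation_set_iff)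
  qed
  moreover have "D \<subseteq> {u, v, w}" using D(1) by (simp add: dissociation_set_def)
  ultimately have "card D < card {u, v, w}" by (simp add: psubset_card_mono psubset_eq)
  moreover have "card {u, v, w} \<le> 3" by (simp add: card_insert_le_m1)
  ultimately show ?thesis using D(2) by simp
qed

theorem calT_diss: "(V, E) \<in> calT \<Longrightarrow> 3 * diss V E = 2 * card V"
proof (induction rule: calT.induct)
  case (P3 a b c)
  have "diss {a, b, c} {{a, b}, {b, c}} \<le> 2" using P3 by (intro diss_path3_le) auto
  moreover have "dissociation_set {a, b, c} {{a, b}, {b, c}} {a, b}"
    using P3 by (intro dissociation_set_doubleton) (auto simp: doubleton_eq_iff)
  then have "card {a, b} \<le> diss {a, b, c} {{a, b}, {b, c}}" by (simp add: card_le_diss)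
  ultimately show ?case using P3 by simp
next
  case (O1 V E u v w x)
  let ?N = "{{u, v}, {v, w}, {w, x}}"
  have fin: "finite V" and E: "\<forall>e\<in>E. e \<subseteq> V" using calT_finite_edges[OF O1(1)] by simp_all
  have "diss (V \<union> {u, v, w}) (E \<union> ?N) \<le> diss V E + diss {u, v, w} ?N"
    using fin by (rule diss_Un_le) simp
  moreover have "diss {u, v, w} ?N \<le> 2" using O1 by (intro diss_path3_le) auto
  moreover have "diss V E + card {u, v} \<le> diss (V \<union> {u, v, w}) (E \<union> ?N)"
  proof (rule diss_Un_ge[OF fin _ E])
    show "dissociation_set {u, v, w} ?N {u, v}"
      using O1 by (intro dissociation_set_doubleton) (auto simp: doubleton_eq_iff)
  qed (use O1 in \<open>auto simp: doubleton_eq_iff\<close>)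
  moreover have "card (V \<union> {u, v, w}) = card V + 3" using O1 fin by simp
  ultimately show ?case using O1 by simp
next
  case (O2 V E v u u' x)
  let ?N = "{{v, u}, {v, u'}, {v, x}}"
  have fin: "finite V" and E: "\<forall>e\<in>E. e \<subseteq> V" using calT_finite_edges[OF O2(1)] by simp_all
  have "diss (V \<union> {v, u, u'}) (E \<union> ?N) \<le> diss V E + diss {v, u, u'} ?N"
    using fin by (rule diss_Un_le) simp
  moreover have "diss {u, v, u'} ?N \<le> 2" using O2 by (intro diss_path3_le) (auto simp: insert_commute)
  then have "diss {v, u, u'} ?N \<le> 2" by (simp add: insert_commute)
  moreover have "diss V E + card {u, u'} \<le> diss (V \<union> {v, u, u'}) (E \<union> ?N)"
  proof (rule diss_Un_ge[OF fin _ E])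
    show "dissociation_set {v, u, u'} ?N {u, u'}"
      using O2 by (intro dissociation_set_doubleton) (auto simp: doubleton_eq_iff)
  qed (use O2 in \<open>auto simp: doubleton_eq_iff\<close>)
  moreover have "card (V \<union> {v, u, u'}) = card V + 3" using O2 fin by simp
  ultimately show ?case using O2 by simp
qed

section \<open>Components of \<open>G - y\<close>\<close>

definition component :: "'a set set \<Rightarrow> 'a set \<Rightarrow> 'a \<Rightarrow> 'a set" where
  "component E S x = {z. reach_in E S x z}"

definition edges_within :: "'a set set \<Rightarrow> 'a set \<Rightarrow> 'a set set" where
  "edges_within E S = {e \<in> E. e \<subseteq> S}"

lemma components_minus_eq: "components_minus V E y = component E (V - {y}) ` (V - {y})"
  by (simp add: components_minus_def component_def[abs_def])

lemma reach_in_edge: "a \<in> S \<Longrightarrow> b \<in> S \<Longrightarrow> {a, b} \<in> E \<Longrightarrow> reach_in E S a b"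
  by (simp add: reach_in_def r_into_rtranclp)

lemma reach_in_trans: "reach_in E S a b \<Longrightarrow> reach_in E S b c \<Longrightarrow> reach_in E S a c"
  unfolding reach_in_def by (rule rtranclp_trans)

lemma reach_in_sym: "reach_in E S a b \<Longrightarrow> reach_in E S b a"
  unfolding reach_in_def
proof (induction rule: rtranclp_induct)
  case (step y z)
  then have "(\<lambda>a b. a \<in> S \<and> b \<in> S \<and> {a, b} \<in> E) z y" by (simp add: insert_commute)
  then show ?case using step(3) by (rule converse_rtranclp_into_rtranclp)
qed simp

lemma reach_in_mono: "S \<subseteq> T \<Longrightarrow> reach_in E S a b \<Longrightarrow> reach_in E T a b"
  unfolding reach_in_def by (erule rtranclp_mono[THEN predicate2D, rotated]) auto

lemma reach_in_closed:
  "reach_in E S a b \<Longrightarrow> a \<in> X \<Longrightarrow> \<forall>p\<in>X. \<forall>q\<in>S. {p, q} \<in> E \<longrightarrow> q \<in> X \<Longrightarrow> b \<in> X"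
  unfolding reach_in_def by (induction rule: rtranclp_induct) auto

lemma reach_in_edges_within: "S \<subseteq> T \<Longrightarrow> reach_in (edges_within E T) S = reach_in E S"
  unfolding reach_in_def edges_within_def by (rule arg_cong[where f = rtranclp]) auto

lemma component_self: "x \<in> component E S x"
  by (simp add: component_def reach_in_def)

lemma component_subset: "x \<in> S \<Longrightarrow> component E S x \<subseteq> S"
  unfolding component_def using reach_in_closed[of E S x _ S] by auto

lemma component_eq:
  assumes "z \<in> component E S x"
  shows "component E S z = component E S x"
proof -
  have xz: "reach_in E S x z" using assms by (simp add: component_def)
  then have zx: "reach_in E S z x" by (rule reach_in_sym)
  show ?thesis
    unfolding component_def using reach_in_trans[OF xz] reach_in_trans[OF zx] by blast
qed

lemma component_eq_edge:
  "u \<in> S \<Longrightarrow> v \<in> S \<Longrightarrow> {u, v} \<in> E \<Longrightarrow> component E S v = component E S u"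
  by (rule component_eq) (simp add: component_def reach_in_edge)

lemma component_eqI:
  assumes "x \<in> X" "\<forall>p\<in>X. \<forall>q\<in>S. {p, q} \<in> E \<longrightarrow> q \<in> X" "\<forall>z\<in>X. reach_in E S x z"
  shows "component E S x = X"
proof
  show "component E S x \<subseteq> X"
  proof
    fix z assume "z \<in> component E S x"
    then have "reach_in E S x z" by (simp add: component_def)
    then show "z \<in> X" using assms(1,2) by (rule reach_in_closed)
  qed
  show "X \<subseteq> component E S x" using assms(3) by (auto simp: component_def)
qed

lemma components_minus_obtain:
  assumes "C \<in> components_minus V E y"
  obtains x where "x \<in> V - {y}" "C = component E (V - {y}) x"
  using assms unfolding components_minus_eq by (rule imageE)

lemma components_minus_subset: "C \<in> components_minus V E y \<Longrightarrow> C \<subseteq> V - {y}"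
  by (metis components_minus_obtain component_subset)

lemma components_minus_disjoint:
  assumes "C \<in> components_minus V E y" "C' \<in> components_minus V E y" "C \<noteq> C'"
  shows "C \<inter> C' = {}"
proof (rule ccontr)
  assume "C \<inter> C' \<noteq> {}"
  then obtain z where z: "z \<in> C" "z \<in> C'" by blast
  obtain x x' where "C = component E (V - {y}) x" and "C' = component E (V - {y}) x'"
    using assms(1,2) by (metis components_minus_obtain)
  with z assms(3) show False using component_eq by metis
qed

lemma components_minus_edge:
  assumes "C \<in> components_minus V E y" "C' \<in> components_minus V E y" "u \<in> C" "v \<in> C'" "{u, v} \<in> E"
  shows "C = C'"
proof -
  obtain x x' where C: "C = component E (V - {y}) x" and C': "C' = component E (V - {y}) x'"
    using assms(1,2) by (metis components_minus_obtain)
  have "u \<in> V - {y}" "v \<in> V - {y}"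
    using components_minus_subset[OF assms(1)] components_minus_subset[OF assms(2)] assms(3,4) by auto
  then have "component E (V - {y}) v = component E (V - {y}) u"
    using assms(5) by (rule component_eq_edge)
  then show ?thesis using assms(3,4) C C' component_eq by metis
qed

lemma component_in_components_minus: "x \<in> V - {y} \<Longrightarrow> component E (V - {y}) x \<in> components_minus V E y"
  by (simp add: components_minus_eq)

lemma finite_components_minus: "finite V \<Longrightarrow> finite (components_minus V E y)"
  by (simp add: components_minus_eq)

lemma sum_card_components_minus:
  assumes "finite V"
  shows "(\<Sum>C\<in>components_minus V E y. card C) = card (V - {y})"
proof -
  have "\<Union>(components_minus V E y) = V - {y}"
  proof
    show "\<Union>(components_minus V E y) \<subseteq> V - {y}" by (intro Union_least components_minus_subset)
    show "V - {y} \<subseteq> \<Union>(components_minus V E y)"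
    proof
      fix x assume "x \<in> V - {y}"
      with component_self show "x \<in> \<Union>(components_minus V E y)"
        by (rule UnionI[rotated, OF _ component_in_components_minus])
    qed
  qed
  moreover have "card (\<Union>(components_minus V E y)) = (\<Sum>C\<in>components_minus V E y. card C)"
  proof (rule card_Union_disjoint)
    show "pairwise disjnt (components_minus V E y)"
      unfolding pairwise_def disjnt_def by (metis components_minus_disjoint)
    show "finite C" if "C \<in> components_minus V E y" for C
      using components_minus_subset[OF that] assms by (meson finite_Diff finite_subset)
  qed
  ultimately show ?thesis by simp
qed

section \<open>Condition (c)\<close>

definition nonzero_mod3_components :: "'a set \<Rightarrow> 'a set set \<Rightarrow> 'a \<Rightarrow> 'a set set" where
  "nonzero_mod3_components V E y = {C \<in> components_minus V E y. card C mod 3 \<noteq> 0}"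

definition mod3_balanced :: "'a set \<Rightarrow> 'a set set \<Rightarrow> bool" where
  "mod3_balanced V E \<longleftrightarrow> card V mod 3 = 0 \<and> (\<forall>y\<in>V. card (nonzero_mod3_components V E y) \<le> 2)"

lemma dissociation_set_UN_components_minus:
  assumes fin: "finite V" and D: "\<forall>C\<in>components_minus V E y. dissociation_set C E (f C)"
  shows "dissociation_set V E (\<Union>C\<in>components_minus V E y. f C)"
    (is "dissociation_set V E ?D")
  unfolding dissociation_set_iff
proof (intro conjI ballI)
  have fC: "f C \<subseteq> C" if "C \<in> components_minus V E y" for C
    using D that by (simp add: dissociation_set_def)
  show "?D \<subseteq> V"
  proof (rule UN_least)
    fix C assume "C \<in> components_minus V E y"
    then show "f C \<subseteq> V" using fC components_minus_subset by (metis Diff_subset subset_trans)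
  qed
  fix v assume "v \<in> ?D"
  then obtain C where C: "C \<in> components_minus V E y" "v \<in> f C" by blast
  have "neighbours E ?D v \<subseteq> neighbours E (f C) v"
  proof
    fix u assume "u \<in> neighbours E ?D v"
    then obtain C' where C': "C' \<in> components_minus V E y" "u \<in> f C'" "{u, v} \<in> E"
      by (auto simp: neighbours_def)
    have "u \<in> C'" "v \<in> C" using fC C C' by blast+
    then have "C' = C" using components_minus_edge[OF C'(1) C(1)] C'(3) by blast
    with C' show "u \<in> neighbours E (f C) v" by (simp add: neighbours_def)
  qed
  moreover have "finite (f C)"
    using fC[OF C(1)] components_minus_subset[OF C(1)] fin by (meson finite_Diff finite_subset)
  then have "finite (neighbours E (f C) v)" by (simp add: neighbours_def)
  ultimately have "card (neighbours E ?D v) \<le> card (neighbours E (f C) v)" by (rule card_mono[rotated])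
  also have "\<dots> \<le> 1" using D C by (simp add: dissociation_set_iff)
  finally show "card (neighbours E ?D v) \<le> 1" .
qed

lemma acyclic_graph_dissociation_set_mod3:
  assumes "finite S" "acyclic_graph S E" "loop_free E"
  shows "\<exists>D. dissociation_set S E D \<and> 2 * card S + (if card S mod 3 \<noteq> 0 then 1 else 0) \<le> 3 * card D"
proof -
  obtain D where "dissociation_set S E D" "2 * card S \<le> 3 * card D"
    using acyclic_graph_large_dissociation_set[OF assms] by blast
  moreover from this(2) have "2 * card S + (if card S mod 3 \<noteq> 0 then 1 else 0) \<le> 3 * card D"
    by presburger
  ultimately show ?thesis by blast
qed

lemma diss_lower_bound_components_minus:
  assumes fin: "finite V" and acyclic: "acyclic_graph V E" and lf: "loop_free E"
  shows "2 * card (V - {y}) + card (nonzero_mod3_components V E y) \<le> 3 * diss V E"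
proof -
  let ?C = "components_minus V E y"
  let ?extra = "\<lambda>C. if card C mod 3 \<noteq> 0 then 1 else 0 :: nat"
  have finC: "finite ?C" using fin by (rule finite_components_minus)
  have "\<exists>D. dissociation_set C E D \<and> 2 * card C + ?extra C \<le> 3 * card D" if C: "C \<in> ?C" for C
  proof -
    have CV: "C \<subseteq> V" using components_minus_subset[OF C] by blast
    show ?thesis
      using acyclic_graph_dissociation_set_mod3[OF finite_subset[OF CV fin] acyclic_graph_mono[OF acyclic CV] lf] .
  qed
  then obtain f where f: "\<forall>C\<in>?C. dissociation_set C E (f C) \<and> 2 * card C + ?extra C \<le> 3 * card (f C)"
    by metis
  have fC: "f C \<subseteq> C" if "C \<in> ?C" for C using f that by (simp add: dissociation_set_def)
  have finf: "finite (f C)" if "C \<in> ?C" for C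
    using fC[OF that] components_minus_subset[OF that] fin by (meson finite_Diff finite_subset)
  have "2 * card (V - {y}) + card (nonzero_mod3_components V E y) = (\<Sum>C\<in>?C. 2 * card C + ?extra C)"
    using finC by (simp add: sum.distrib sum_distrib_left[symmetric] sum_card_components_minus[OF fin]
        nonzero_mod3_components_def sum.inter_filter[symmetric])
  also have "\<dots> \<le> (\<Sum>C\<in>?C. 3 * card (f C))" using f by (intro sum_mono) blast
  also have "\<dots> = 3 * card (\<Union>C\<in>?C. f C)"
  proof -
    have "card (\<Union>C\<in>?C. f C) = (\<Sum>C\<in>?C. card (f C))"
    proof (rule card_UN_disjoint[OF finC])
      show "\<forall>C\<in>?C. finite (f C)" using finf by blast
      show "\<forall>C\<in>?C. \<forall>C'\<in>?C. C \<noteq> C' \<longrightarrow> f C \<inter> f C' = {}"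
      proof (intro ballI impI)
        fix C C' assume C: "C \<in> ?C" "C' \<in> ?C" "C \<noteq> C'"
        then have "C \<inter> C' = {}" by (rule components_minus_disjoint)
        with fC[OF C(1)] fC[OF C(2)] show "f C \<inter> f C' = {}" by blast
      qed
    qed
    then show ?thesis by (simp add: sum_distrib_left)
  qed
  also have "\<dots> \<le> 3 * diss V E"
    using card_le_diss[OF fin dissociation_set_UN_components_minus[OF fin]] f by simp
  finally show ?thesis .
qed

theorem diss_two_thirds_imp_mod3_balanced:
  assumes "tree V E" "3 * diss V E = 2 * card V"
  shows "mod3_balanced V E"
  unfolding mod3_balanced_def
proof
  have "finite V" "acyclic_graph V E" "loop_free E"
    using assms(1) graph_loop_free by (auto simp: tree_def graph_def)
  then have bound: "2 * card (V - {y}) + card (nonzero_mod3_components V E y) \<le> 2 * card V" for y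
    using diss_lower_bound_components_minus assms(2) by metis
  show "card V mod 3 = 0" using assms(2) by presburger
  show "\<forall>y\<in>V. card (nonzero_mod3_components V E y) \<le> 2"
  proof
    fix y assume "y \<in> V"
    moreover from this have "0 < card V" using \<open>finite V\<close> by (auto simp: card_gt_0_iff)
    ultimately have "card (V - {y}) + 1 = card V" by (simp add: card_Diff_singleton)
    then show "card (nonzero_mod3_components V E y) \<le> 2" using bound[of y] by linarith
  qed
qed

section \<open>Trees satisfying condition (c) lie in \<open>\<T>\<close>\<close>

definition pendant_at :: "'a set set \<Rightarrow> 'a set \<Rightarrow> 'a set \<Rightarrow> 'a \<Rightarrow> bool" where
  "pendant_at E V P x \<longleftrightarrow> P \<subseteq> V \<and> x \<in> V - P \<and> (\<forall>p\<in>P. \<forall>q\<in>V - P. {p, q} \<in> E \<longrightarrow> q = x)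
     \<and> (\<forall>p\<in>P. \<forall>q\<in>P. reach_in E P p q)"

text \<open>Collapsing \<open>P\<close> onto \<open>x\<close> turns a walk in \<open>S\<close> into a walk in \<open>S - P\<close>.\<close>

lemma reach_in_Diff_pendant:
  assumes cut: "\<forall>p\<in>P. \<forall>q\<in>S - P. {p, q} \<in> E \<longrightarrow> q = x"
    and reach: "reach_in E S a b" and "a \<notin> P" "b \<notin> P"
  shows "reach_in E (S - P) a b"
proof -
  define f where "f z = (if z \<in> P then x else z)" for z
  have "reach_in E (S - P) (f a) (f b)"
    using reach unfolding reach_in_def
  proof (induction rule: rtranclp_induct)
    case (step y z)
    then have yz: "y \<in> S" "z \<in> S" "{y, z} \<in> E" by simp_all
    have "f y = f z \<or> (y \<in> S - P \<and> z \<in> S - P)"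
    proof (cases "y \<in> P"; cases "z \<in> P")
      assume "y \<in> P" "z \<notin> P"
      with cut yz have "z = x" by blast
      with \<open>y \<in> P\<close> \<open>z \<notin> P\<close> show ?thesis by (simp add: f_def)
    next
      assume "y \<notin> P" "z \<in> P"
      with cut yz have "y = x" by (metis Diff_iff insert_commute)
      with \<open>y \<notin> P\<close> \<open>z \<in> P\<close> show ?thesis by (simp add: f_def)
    qed (use yz in \<open>simp_all add: f_def\<close>)
    then show ?case
    proof
      assume "y \<in> S - P \<and> z \<in> S - P"
      with yz step.IH show ?thesis by (simp add: f_def rtranclp.rtrancl_into_rtrancl)
    qed (use step.IH in simp)
  qed simp
  then show ?thesis using assms(3,4) by (simp add: f_def)
qed

lemma component_Diff_pendant:
  assumes cut: "\<forall>p\<in>P. \<forall>q\<in>S - P. {p, q} \<in> E \<longrightarrow> q = x" and z: "z \<in> S - P"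
  shows "component E (S - P) z = component E S z - P"
proof
  show "component E (S - P) z \<subseteq> component E S z - P"
    using component_subset[OF z] reach_in_mono[of "S - P" S E z] by (auto simp: component_def)
  show "component E S z - P \<subseteq> component E (S - P) z"
    using reach_in_Diff_pendant[OF cut, of z] z by (auto simp: component_def)
qed

lemma connected_subset_component:
  assumes "\<forall>p\<in>P. \<forall>q\<in>P. reach_in E S p q"
  shows "P \<subseteq> component E S z \<or> P \<inter> component E S z = {}"
proof (rule disjCI)
  assume "P \<inter> component E S z \<noteq> {}"
  then obtain p where "p \<in> P" "reach_in E S z p" by (auto simp: component_def)
  with assms show "P \<subseteq> component E S z" by (auto simp: component_def intro: reach_in_trans)
qed

lemma tree_Diff_pendant:
  assumes tree: "tree V E" and pendant: "pendant_at E V P x"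
  shows "tree (V - P) (edges_within E (V - P))"
  unfolding tree_def
proof (intro conjI)
  have g: "graph V E" and conn: "connected_graph V E" and ac: "acyclic_graph V E"
    using tree by (simp_all add: tree_def)
  show "graph (V - P) (edges_within E (V - P))"
    using g by (fastforce simp: graph_def edges_within_def)
  show "acyclic_graph (V - P) (edges_within E (V - P))"
    using ac by (auto simp: acyclic_graph_def is_cycle_def edges_within_def)
  have cut: "\<forall>p\<in>P. \<forall>q\<in>V - P. {p, q} \<in> E \<longrightarrow> q = x" and "x \<in> V - P"
    using pendant by (simp_all add: pendant_at_def)
  show "connected_graph (V - P) (edges_within E (V - P))"
    unfolding connected_graph_def
  proof (intro conjI ballI)
    show "V - P \<noteq> {}" using \<open>x \<in> V - P\<close> by blast
    fix a b assume ab: "a \<in> V - P" "b \<in> V - P"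
    then have "reach_in E V a b" using conn by (simp add: connected_graph_def)
    then have "reach_in E (V - P) a b" using ab by (intro reach_in_Diff_pendant[OF cut]) simp_all
    then show "reach_in (edges_within E (V - P)) (V - P) a b" by (simp add: reach_in_edges_within)
  qed
qed

lemma card_Diff_mod3:
  assumes "finite C" "card P = 3" "P \<subseteq> C \<or> P \<inter> C = {}"
  shows "card (C - P) mod 3 = card C mod 3"
proof -
  have "C \<inter> P = P \<or> C \<inter> P = {}" using assms(3) by blast
  then have "card (C \<inter> P) = 0 \<or> card (C \<inter> P) = 3" using assms(2) by auto
  then show ?thesis using card_Int_Diff[OF assms(1), of P] by auto
qed

text \<open>Removing a connected pendant set of three vertices changes the order of each component
  of \<open>G - y\<close> by \<open>0\<close> or \<open>3\<close>.\<close>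

lemma nonzero_mod3_components_Diff_pendant:
  assumes fin: "finite V" and pendant: "pendant_at E V P x" and P3: "card P = 3" and y: "y \<in> V - P"
  shows "nonzero_mod3_components (V - P) (edges_within E (V - P)) y
    \<subseteq> (\<lambda>C. C - P) ` nonzero_mod3_components V E y"
proof -
  define S where "S = V - {y}"
  have "P \<subseteq> V" and cut: "\<forall>p\<in>P. \<forall>q\<in>V - P. {p, q} \<in> E \<longrightarrow> q = x"
    and conn: "\<forall>p\<in>P. \<forall>q\<in>P. reach_in E P p q"
    using pendant by (simp_all add: pendant_at_def)
  then have PS: "P \<subseteq> S" using y by (auto simp: S_def)
  have cutS: "\<forall>p\<in>P. \<forall>q\<in>S - P. {p, q} \<in> E \<longrightarrow> q = x" using cut by (auto simp: S_def)
  have connS: "\<forall>p\<in>P. \<forall>q\<in>P. reach_in E S p q" using conn reach_in_mono[OF PS] by blast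
  have comps: "components_minus (V - P) (edges_within E (V - P)) y = component E (S - P) ` (S - P)"
  proof -
    have "V - P - {y} = S - P" by (auto simp: S_def)
    moreover have "reach_in (edges_within E (V - P)) (S - P) = reach_in E (S - P)"
      by (rule reach_in_edges_within) (auto simp: S_def)
    ultimately show ?thesis by (simp add: components_minus_eq component_def)
  qed
  show ?thesis
    unfolding nonzero_mod3_components_def
  proof (intro subsetI)
    fix C' assume "C' \<in> {C \<in> components_minus (V - P) (edges_within E (V - P)) y. card C mod 3 \<noteq> 0}"
    then obtain z where z: "z \<in> S - P" and C': "C' = component E (S - P) z"
      and nonzero: "card (component E (S - P) z) mod 3 \<noteq> 0" unfolding comps by blast
    let ?C = "component E S z"
    have "?C \<in> components_minus V E y" using z by (simp add: S_def component_in_components_minus)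
    moreover have "finite ?C" using component_subset[of z S E] z fin by (simp add: S_def finite_subset)
    then have "card (?C - P) mod 3 = card ?C mod 3"
      using P3 connected_subset_component[OF connS] by (rule card_Diff_mod3)
    moreover have "component E (S - P) z = ?C - P" using cutS z by (rule component_Diff_pendant)
    ultimately show "C' \<in> (\<lambda>C. C - P) ` {C \<in> components_minus V E y. card C mod 3 \<noteq> 0}"
      using nonzero C' by auto
  qed
qed

lemma mod3_balanced_Diff_pendant:
  assumes fin: "finite V" and pendant: "pendant_at E V P x" and P3: "card P = 3"
    and balanced: "mod3_balanced V E"
  shows "mod3_balanced (V - P) (edges_within E (V - P))"
  unfolding mod3_balanced_def
proof (intro conjI ballI)
  have "card V = card (V \<inter> P) + card (V - P)" using fin by (rule card_Int_Diff)
  then have "card V = card (V - P) + 3" using pendant P3 by (simp add: Int_absorb1 pendant_at_def)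
  then show "card (V - P) mod 3 = 0" using balanced by (simp add: mod3_balanced_def)
  fix y assume y: "y \<in> V - P"
  have "finite (nonzero_mod3_components V E y)"
    using fin by (simp add: nonzero_mod3_components_def finite_components_minus)
  then have "card (nonzero_mod3_components (V - P) (edges_within E (V - P)) y)
      \<le> card (nonzero_mod3_components V E y)"
    using nonzero_mod3_components_Diff_pendant[OF fin pendant P3 y]
    by (meson card_image_le card_mono finite_imageI le_trans)
  also have "\<dots> \<le> 2" using balanced y by (simp add: mod3_balanced_def)
  finally show "card (nonzero_mod3_components (V - P) (edges_within E (V - P)) y) \<le> 2" .
qed

lemma connected_graph_closed_eq:
  assumes "connected_graph V E" "x \<in> X" "X \<subseteq> V" "\<forall>p\<in>X. neighbours E V p \<subseteq> X"
  shows "X = V"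
proof
  show "V \<subseteq> X"
  proof
    fix z assume "z \<in> V"
    then have "reach_in E V x z" using assms(1-3) by (auto simp: connected_graph_def)
    moreover have "\<forall>p\<in>X. \<forall>q\<in>V. {p, q} \<in> E \<longrightarrow> q \<in> X"
      using assms(4) by (auto simp: neighbours_def insert_commute)
    ultimately show "z \<in> X" using assms(2) by (blast intro: reach_in_closed)
  qed
qed (rule assms(3))

lemma component_star:
  assumes w: "w \<in> V" "w \<noteq> c" and L: "neighbours E V w - {c} = L"
    and leaves: "\<forall>l\<in>L. neighbours E V l = {w}"
  shows "component E (V - {c}) w = insert w L"
proof (rule component_eqI)
  show "\<forall>p\<in>insert w L. \<forall>q\<in>V - {c}. {p, q} \<in> E \<longrightarrow> q \<in> insert w L"
  proof (intro ballI impI)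
    fix p q assume p: "p \<in> insert w L" and q: "q \<in> V - {c}" and "{p, q} \<in> E"
    then have "q \<in> neighbours E V p" by (simp add: neighbours_def insert_commute)
    with p q L leaves show "q \<in> insert w L" by auto
  qed
  show "\<forall>z\<in>insert w L. reach_in E (V - {c}) w z"
  proof
    fix z assume "z \<in> insert w L"
    moreover have "reach_in E (V - {c}) w l" if "l \<in> L" for l
      using that w L by (intro reach_in_edge) (auto simp: neighbours_def insert_commute)
    ultimately show "reach_in E (V - {c}) w z" by (auto simp: reach_in_def)
  qed
qed simp

lemma mod3_balanced_leaves_le_two:
  assumes fin: "finite V" and lf: "loop_free E" and balanced: "mod3_balanced V E" and y: "y \<in> V"
    and Ls: "Ls \<subseteq> neighbours E V y" and leaves: "\<forall>l\<in>Ls. neighbours E V l = {y}"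
  shows "card Ls \<le> 2"
proof -
  have "{l} \<in> nonzero_mod3_components V E y" if l: "l \<in> Ls" for l
  proof -
    have lV: "l \<in> V" "l \<noteq> y"
      using Ls l loop_free_not_neighbour[OF lf, of y V] by (auto simp: neighbours_def)
    have "neighbours E V l - {y} = {}" using leaves l by simp
    then have "component E (V - {y}) l = {l}" using component_star[OF lV, of E "{}"] by simp
    then show ?thesis
      using component_in_components_minus[of l V y E] lV by (simp add: nonzero_mod3_components_def)
  qed
  then have "(\<lambda>l. {l}) ` Ls \<subseteq> nonzero_mod3_components V E y" by blast
  moreover have "finite (nonzero_mod3_components V E y)"
    using fin by (simp add: nonzero_mod3_components_def finite_components_minus)
  ultimately have "card ((\<lambda>l. {l}) ` Ls) \<le> card (nonzero_mod3_components V E y)" by (rule card_mono[rotated])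
  moreover have "card ((\<lambda>l. {l}) ` Ls) = card Ls" by (rule card_image) (simp add: inj_on_def)
  moreover have "card (nonzero_mod3_components V E y) \<le> 2" using balanced y by (simp add: mod3_balanced_def)
  ultimately show ?thesis by simp
qed

text \<open>The orders of the components of \<open>G - y\<close> add up to \<open>|V| - 1 \<equiv> 2 (mod 3)\<close>, so two
  components with nonzero residue are all there are and their orders sum to \<open>2\<close> modulo 3.\<close>

lemma mod3_balanced_two_components:
  assumes fin: "finite V" and balanced: "mod3_balanced V E" and y: "y \<in> V"
    and C: "C1 \<in> nonzero_mod3_components V E y" "C2 \<in> nonzero_mod3_components V E y" "C1 \<noteq> C2"
  shows "(card C1 + card C2) mod 3 = 2"
proof -
  let ?C = "components_minus V E y" and ?N = "nonzero_mod3_components V E y"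
  have finC: "finite ?C" using fin by (rule finite_components_minus)
  have NC: "?N \<subseteq> ?C" by (auto simp: nonzero_mod3_components_def)
  have "card ?N \<le> 2" using balanced y by (simp add: mod3_balanced_def)
  moreover have "{C1, C2} \<subseteq> ?N" "card {C1, C2} = 2" using C by auto
  moreover have "finite ?N" using finC NC by (rule finite_subset[rotated])
  ultimately have N: "?N = {C1, C2}" by (metis card_seteq)
  have "(\<Sum>C\<in>?C. card C) = (\<Sum>C\<in>?C - ?N. card C) + (\<Sum>C\<in>?N. card C)"
    using NC finC by (rule sum.subset_diff)
  moreover have "3 dvd (\<Sum>C\<in>?C - ?N. card C)" by (rule dvd_sum) (auto simp: nonzero_mod3_components_def)
  moreover have "(\<Sum>C\<in>?N. card C) = card C1 + card C2" using N C(3) by simp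
  moreover have "0 < card V" using fin y by (auto simp: card_gt_0_iff)
  then have "(\<Sum>C\<in>?C. card C) + 1 = card V"
    using sum_card_components_minus[OF fin, of E y] y by (simp add: card_Diff_singleton)
  moreover have "card V mod 3 = 0" using balanced by (simp add: mod3_balanced_def)
  ultimately show ?thesis by presburger
qed

definition path3_graph :: "'a set set \<Rightarrow> 'a set \<Rightarrow> 'a \<Rightarrow> 'a \<Rightarrow> 'a \<Rightarrow> bool" where
  "path3_graph E V a b c \<longleftrightarrow> V = {a, b, c} \<and> distinct [a, b, c] \<and>
     neighbours E V a = {b} \<and> neighbours E V b = {a, c} \<and> neighbours E V c = {b}"

text \<open>The path \<open>a b c\<close> hangs off the rest of the graph by the edge \<open>cd\<close>, as created by \<open>(O\<^sub>1)\<close>.\<close>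

definition pendant_P3_end :: "'a set set \<Rightarrow> 'a set \<Rightarrow> 'a \<Rightarrow> 'a \<Rightarrow> 'a \<Rightarrow> 'a \<Rightarrow> bool" where
  "pendant_P3_end E V a b c d \<longleftrightarrow> distinct [a, b, c, d] \<and> {a, b, c, d} \<subseteq> V \<and>
     neighbours E V a = {b} \<and> neighbours E V b = {a, c} \<and> neighbours E V c = {b, d}"

text \<open>The path \<open>a b l\<close> hangs off the rest of the graph by the edge \<open>bc\<close>, as created by \<open>(O\<^sub>2)\<close>.\<close>

definition pendant_P3_centre :: "'a set set \<Rightarrow> 'a set \<Rightarrow> 'a \<Rightarrow> 'a \<Rightarrow> 'a \<Rightarrow> 'a \<Rightarrow> bool" where
  "pendant_P3_centre E V a l b c \<longleftrightarrow> distinct [a, l, b, c] \<and> {a, l, b, c} \<subseteq> V \<and>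
     neighbours E V a = {b} \<and> neighbours E V l = {b} \<and> neighbours E V b = {a, l, c}"

lemma graph_edges_decompose:
  assumes graph: "graph V E" and "P \<subseteq> V"
  shows "E = edges_within E (V - P) \<union> (\<Union>p\<in>P. (\<lambda>q. {q, p}) ` neighbours E V p)"
proof (intro equalityI subsetI)
  fix e assume e: "e \<in> E"
  then obtain p q where pq: "e = {p, q}" "p \<in> V" "q \<in> V" using graph by (auto simp: graph_def)
  show "e \<in> edges_within E (V - P) \<union> (\<Union>p\<in>P. (\<lambda>q. {q, p}) ` neighbours E V p)"
  proof (cases "p \<in> P \<or> q \<in> P")
    case True
    then show ?thesis
    proof
      assume "p \<in> P"
      moreover have "q \<in> neighbours E V p" using e pq by (simp add: neighbours_def insert_commute)
      ultimately show ?thesis using pq(1) by (auto simp: insert_commute)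
    next
      assume "q \<in> P"
      moreover have "p \<in> neighbours E V q" using e pq by (simp add: neighbours_def)
      ultimately show ?thesis using pq(1) by auto
    qed
  next
    case False
    then show ?thesis using e pq by (simp add: edges_within_def)
  qed
qed (auto simp: edges_within_def neighbours_def)

lemma edges_within_empty: "graph V E \<Longrightarrow> edges_within E {} = {}"
  by (auto simp: graph_def edges_within_def)

lemma calT_path3_graph:
  assumes graph: "graph V E" and P3: "path3_graph E V a b c"
  shows "(V, E) \<in> calT"
proof -
  have "E = edges_within E (V - V) \<union> (\<Union>p\<in>V. (\<lambda>q. {q, p}) ` neighbours E V p)"
    using graph by (rule graph_edges_decompose) simp
  also have "\<dots> = {{a, b}, {b, c}}"
    using P3 edges_within_empty[OF graph] by (auto simp: path3_graph_def insert_commute)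
  finally show ?thesis using P3 by (simp add: path3_graph_def calT.P3)
qed

lemma calT_pendant_P3_end:
  assumes graph: "graph V E" and pendant: "pendant_P3_end E V a b c d"
    and reduct: "(V - {a, b, c}, edges_within E (V - {a, b, c})) \<in> calT"
  shows "(V, E) \<in> calT"
proof -
  have "(V - {a, b, c} \<union> {a, b, c}, edges_within E (V - {a, b, c}) \<union> {{a, b}, {b, c}, {c, d}}) \<in> calT"
    using pendant by (intro calT.O1[OF reduct]) (auto simp: pendant_P3_end_def)
  moreover have "V - {a, b, c} \<union> {a, b, c} = V" using pendant by (auto simp: pendant_P3_end_def)
  moreover have "E = edges_within E (V - {a, b, c}) \<union> {{a, b}, {b, c}, {c, d}}"
    using graph_edges_decompose[OF graph, of "{a, b, c}"] pendant
    by (auto simp: pendant_P3_end_def insert_commute)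
  ultimately show ?thesis by simp
qed

lemma calT_pendant_P3_centre:
  assumes graph: "graph V E" and pendant: "pendant_P3_centre E V a l b c"
    and reduct: "(V - {b, a, l}, edges_within E (V - {b, a, l})) \<in> calT"
  shows "(V, E) \<in> calT"
proof -
  have "(V - {b, a, l} \<union> {b, a, l}, edges_within E (V - {b, a, l}) \<union> {{b, a}, {b, l}, {b, c}}) \<in> calT"
    using pendant by (intro calT.O2[OF reduct]) (auto simp: pendant_P3_centre_def)
  moreover have "V - {b, a, l} \<union> {b, a, l} = V" using pendant by (auto simp: pendant_P3_centre_def)
  moreover have "E = edges_within E (V - {b, a, l}) \<union> {{b, a}, {b, l}, {b, c}}"
    using graph_edges_decompose[OF graph, of "{b, a, l}"] pendant
    by (auto simp: pendant_P3_centre_def insert_commute)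
  ultimately show ?thesis by simp
qed

lemma reach_in_from_vertex:
  assumes "\<forall>p\<in>P. reach_in E P b p"
  shows "\<forall>p\<in>P. \<forall>q\<in>P. reach_in E P p q"
  using assms by (meson reach_in_sym reach_in_trans)

lemma pendant_at_cut:
  assumes "\<forall>p\<in>P. neighbours E V p \<subseteq> P \<union> {x}"
  shows "\<forall>p\<in>P. \<forall>q\<in>V - P. {p, q} \<in> E \<longrightarrow> q = x"
proof (intro ballI impI)
  fix p q assume p: "p \<in> P" and q: "q \<in> V - P" and "{p, q} \<in> E"
  then have "q \<in> neighbours E V p" by (simp add: neighbours_def insert_commute)
  with assms p q show "q = x" by blast
qed

lemma pendant_P3_end_pendant_at:
  assumes pendant: "pendant_P3_end E V a b c d"
  shows "pendant_at E V {a, b, c} d"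
  unfolding pendant_at_def
proof (intro conjI)
  show "{a, b, c} \<subseteq> V" "d \<in> V - {a, b, c}" using pendant by (auto simp: pendant_P3_end_def)
  show "\<forall>p\<in>{a, b, c}. \<forall>q\<in>V - {a, b, c}. {p, q} \<in> E \<longrightarrow> q = d"
    using pendant by (intro pendant_at_cut) (auto simp: pendant_P3_end_def)
  have "a \<in> neighbours E V b" "c \<in> neighbours E V b" using pendant by (simp_all add: pendant_P3_end_def)
  then have "reach_in E {a, b, c} b a" "reach_in E {a, b, c} b c"
    by (auto simp: neighbours_def insert_commute intro!: reach_in_edge)
  then have "\<forall>p\<in>{a, b, c}. reach_in E {a, b, c} b p" by (auto simp: reach_in_def)
  then show "\<forall>p\<in>{a, b, c}. \<forall>q\<in>{a, b, c}. reach_in E {a, b, c} p q" by (rule reach_in_from_vertex)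
qed

lemma pendant_P3_centre_pendant_at:
  assumes pendant: "pendant_P3_centre E V a l b c"
  shows "pendant_at E V {b, a, l} c"
  unfolding pendant_at_def
proof (intro conjI)
  show "{b, a, l} \<subseteq> V" "c \<in> V - {b, a, l}" using pendant by (auto simp: pendant_P3_centre_def)
  show "\<forall>p\<in>{b, a, l}. \<forall>q\<in>V - {b, a, l}. {p, q} \<in> E \<longrightarrow> q = c"
    using pendant by (intro pendant_at_cut) (auto simp: pendant_P3_centre_def)
  have "a \<in> neighbours E V b" "l \<in> neighbours E V b" using pendant by (simp_all add: pendant_P3_centre_def)
  then have "reach_in E {b, a, l} b a" "reach_in E {b, a, l} b l"
    by (auto simp: neighbours_def insert_commute intro!: reach_in_edge)
  then have "\<forall>p\<in>{b, a, l}. reach_in E {b, a, l} b p" by (auto simp: reach_in_def)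
  then show "\<forall>p\<in>{b, a, l}. \<forall>q\<in>{b, a, l}. reach_in E {b, a, l} p q" by (rule reach_in_from_vertex)
qed

lemma card_2_obtain_other:
  assumes "card L = 2" "a \<in> L"
  obtains l where "l \<noteq> a" "L = {a, l}"
proof -
  obtain x y where L: "L = {x, y}" "x \<noteq> y" using assms(1) by (auto simp: card_2_iff)
  with assms(2) have "a = x \<or> a = y" by blast
  then show thesis
  proof
    assume "a = x"
    with L show thesis by (intro that[of y]) auto
  next
    assume "a = y"
    with L show thesis by (intro that[of x]) (auto simp: insert_commute)
  qed
qed

definition path3_or_pendant_P3 :: "'a set set \<Rightarrow> 'a set \<Rightarrow> bool" where
  "path3_or_pendant_P3 E V \<longleftrightarrow> (\<exists>a b c. path3_graph E V a b c)
     \<or> (\<exists>a b c d. pendant_P3_end E V a b c d) \<or> (\<exists>a l b c. pendant_P3_centre E V a l b c)"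

text \<open>A branch at the third vertex \<open>c\<close> of a longest path consists of \<open>w\<close> and its leaves, so it
  is a component of \<open>G - c\<close> of order at most 3 besides the component \<open>{a, b}\<close> of order 2;
  condition (c) forces its order to be 3.\<close>

lemma mod3_balanced_branch_at_third_vertex:
  assumes tree: "tree V E" and balanced: "mod3_balanced V E"
    and longest: "longest_path E V (a # b # c # cs)"
    and nb_a: "neighbours E V a = {b}" and nb_b: "neighbours E V b = {a, c}"
    and w: "w \<in> neighbours E V c - {b} - set (take 1 cs)"
  obtains l1 l2 where "pendant_P3_centre E V l1 l2 w c"
proof -
  have fin: "finite V" and ac: "acyclic_graph V E" and lf: "loop_free E"
    using tree graph_loop_free by (auto simp: tree_def graph_def)
  have abc: "distinct [a, b, c]" "a \<in> V" "b \<in> V" "c \<in> V"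
    using longest by (auto simp: longest_path_def is_path_def)
  define Lw where "Lw = neighbours E V w - {c}"
  have leaves: "\<forall>l\<in>Lw. neighbours E V l = {w}"
    using longest_path_third_vertex_leaves[OF longest ac lf w] by (simp add: Lw_def)
  have wV: "w \<in> V" "w \<noteq> c" using w loop_free_not_neighbour[OF lf, of c V] by (auto simp: neighbours_def)
  have wLw: "w \<notin> Lw" using loop_free_not_neighbour[OF lf] by (simp add: Lw_def)
  have nb_w: "neighbours E V w = insert c Lw"
    using w abc(4) neighbours_sym[of w E V c] by (auto simp: Lw_def)
  have "w \<noteq> a" using nb_a nb_w abc(1) by auto
  have Lw_le: "card Lw \<le> 2"
    using fin lf balanced wV(1) _ leaves by (rule mod3_balanced_leaves_le_two) (simp add: Lw_def)
  have finLw: "finite Lw" using fin by (simp add: Lw_def neighbours_def)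
  have "card Lw = 2"
  proof (rule ccontr)
    assume "card Lw \<noteq> 2"
    have "component E (V - {c}) b = {b, a}"
      using component_star[of b V c E "{a}"] abc nb_a nb_b by auto
    moreover have "card {b, a} = 2" using abc(1) by auto
    ultimately have "{b, a} \<in> nonzero_mod3_components V E c"
      using component_in_components_minus[of b V c E] abc by (simp add: nonzero_mod3_components_def)
    moreover have "component E (V - {c}) w = insert w Lw"
      using component_star[OF wV Lw_def[symmetric] leaves] .
    then have "insert w Lw \<in> nonzero_mod3_components V E c"
      using component_in_components_minus[of w V c E] wV wLw finLw Lw_le \<open>card Lw \<noteq> 2\<close>
      by (simp add: nonzero_mod3_components_def)
    moreover have "{b, a} \<noteq> insert w Lw" using w \<open>w \<noteq> a\<close> by auto
    ultimately have "(card {b, a} + card (insert w Lw)) mod 3 = 2"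
      by (rule mod3_balanced_two_components[OF fin balanced abc(4)])
    then show False using \<open>card {b, a} = 2\<close> wLw finLw Lw_le \<open>card Lw \<noteq> 2\<close> by simp
  qed
  then obtain l1 l2 where Lw: "Lw = {l1, l2}" "l1 \<noteq> l2" by (auto simp: card_2_iff)
  have "Lw \<subseteq> V" "c \<notin> Lw" by (auto simp: Lw_def neighbours_def)
  then have "l1 \<in> V" "l2 \<in> V" "l1 \<noteq> c" "l2 \<noteq> c" "l1 \<noteq> w" "l2 \<noteq> w" using Lw wLw by auto
  moreover have "neighbours E V l1 = {w}" "neighbours E V l2 = {w}" using leaves Lw by auto
  moreover have "neighbours E V w = {l1, l2, c}" using nb_w Lw by auto
  ultimately show thesis using wV abc(4) Lw(2) by (intro that) (simp add: pendant_P3_centre_def)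
qed

lemma mod3_balanced_third_vertex_shape:
  assumes tree: "tree V E" and balanced: "mod3_balanced V E"
    and longest: "longest_path E V (a # b # c # cs)"
    and nb_a: "neighbours E V a = {b}" and nb_b: "neighbours E V b = {a, c}"
  shows "path3_or_pendant_P3 E V"
proof (cases "neighbours E V c - {b} - set (take 1 cs) = {}")
  case False
  then obtain w where "w \<in> neighbours E V c - {b} - set (take 1 cs)" by blast
  then obtain l1 l2 where "pendant_P3_centre E V l1 l2 w c"
    by (rule mod3_balanced_branch_at_third_vertex[OF assms])
  then show ?thesis unfolding path3_or_pendant_P3_def by blast
next
  case True
  have conn: "connected_graph V E" using tree by (simp add: tree_def)
  have path: "is_path E V (a # b # c # cs)" using longest by (simp add: longest_path_def)
  then have abc: "distinct [a, b, c]" "a \<in> V" "b \<in> V" "c \<in> V" by (auto simp: is_path_def)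
  have "c \<in> neighbours E V b" using nb_b by simp
  then have b_nb_c: "b \<in> neighbours E V c" using abc(3) by (rule neighbours_sym)
  from True have nb_c: "neighbours E V c \<subseteq> insert b (set (take 1 cs))" by blast
  show ?thesis
  proof (cases cs)
    case Nil
    with nb_c b_nb_c have nb_c: "neighbours E V c = {b}" by auto
    have "{a, b, c} = V"
      using nb_a nb_b nb_c abc by (intro connected_graph_closed_eq[OF conn, of a]) auto
    then have "path3_graph E V a b c" using nb_a nb_b nb_c abc(1) by (simp add: path3_graph_def)
    then show ?thesis unfolding path3_or_pendant_P3_def by blast
  next
    case (Cons d cs')
    with path have "d \<in> V" "{c, d} \<in> E" "distinct [a, b, c, d]" by (auto simp: is_path_Cons)
    then have "d \<in> neighbours E V c" by (simp add: neighbours_def insert_commute)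
    with nb_c b_nb_c Cons have "neighbours E V c = {b, d}" by auto
    then have "pendant_P3_end E V a b c d"
      using nb_a nb_b abc \<open>d \<in> V\<close> \<open>distinct [a, b, c, d]\<close> by (simp add: pendant_P3_end_def)
    then show ?thesis unfolding path3_or_pendant_P3_def by blast
  qed
qed

text \<open>The second vertex \<open>b\<close> of a longest path carries at most two leaves. If the path ends at \<open>b\<close>,
  the tree is a star with at most three vertices, hence a \<open>P\<^sub>3\<close>; with two leaves and a further
  neighbour it carries a pendant \<open>P\<^sub>3\<close> attached at its centre; otherwise the search moves on to
  the third vertex.\<close>

lemma mod3_balanced_second_vertex_shape:
  assumes tree: "tree V E" and balanced: "mod3_balanced V E"
    and longest: "longest_path E V (a # b # cs)"
  shows "path3_or_pendant_P3 E V"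
proof -
  have fin: "finite V" and conn: "connected_graph V E" and ac: "acyclic_graph V E" and lf: "loop_free E"
    using tree graph_loop_free by (auto simp: tree_def graph_def)
  have path: "is_path E V (a # b # cs)" using longest by (simp add: longest_path_def)
  then have aV: "a \<in> V" and bV: "b \<in> V" and "a \<noteq> b" by (simp_all add: is_path_Cons)
  have nb_a: "neighbours E V a = {b}" by (rule longest_path_start_leaf[OF longest ac lf])
  define L where "L = neighbours E V b - set (take 1 cs)"
  note L = longest_path_second_vertex[OF longest ac lf, folded L_def]
  have finL: "finite L" using L(3) fin by (rule finite_subset)
  have "card L \<le> 2"
    using fin lf balanced bV _ L(4) by (rule mod3_balanced_leaves_le_two) (simp add: L_def)
  moreover have "0 < card L" using L(1) finL by (auto simp: card_gt_0_iff)
  ultimately have card_L: "card L = 1 \<or> card L = 2" by linarith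
  show ?thesis
  proof (cases cs)
    case Nil
    then have nb_b: "neighbours E V b = L" by (simp add: L_def)
    have "insert b L = V"
      using bV L(4) nb_b by (intro connected_graph_closed_eq[OF conn, of b]) (auto simp: neighbours_def)
    then have "card V = card L + 1" using L(2) finL by (metis Suc_eq_plus1 card_insert_disjoint)
    moreover have "card V mod 3 = 0" using balanced by (simp add: mod3_balanced_def)
    ultimately have "card L = 2" using card_L by presburger
    then obtain l where "l \<noteq> a" "L = {a, l}" using L(1) by (rule card_2_obtain_other)
    with \<open>insert b L = V\<close> L(2,4) nb_b nb_a \<open>a \<noteq> b\<close>
    have "path3_graph E V a b l" by (auto simp: path3_graph_def)
    then show ?thesis unfolding path3_or_pendant_P3_def by blast
  next
    case (Cons c cs')
    note longest = longest[unfolded Cons]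
    have "c \<in> V" "{b, c} \<in> E" "distinct [a, b, c]" using path Cons by (auto simp: is_path_Cons)
    then have c_nb_b: "c \<in> neighbours E V b" by (simp add: neighbours_def insert_commute)
    have L_eq: "L = neighbours E V b - {c}" using Cons by (simp add: L_def)
    show ?thesis
      using card_L
    proof
      assume "card L = 1"
      then have "L = {a}" using L(1) by (auto simp: card_1_singleton_iff)
      then have "neighbours E V b = {a, c}" using L_eq c_nb_b by auto
      from mod3_balanced_third_vertex_shape[OF tree balanced longest nb_a this] show ?thesis .
    next
      assume "card L = 2"
      then obtain l where "l \<noteq> a" "L = {a, l}" using L(1) by (rule card_2_obtain_other)
      moreover have "l \<in> V" "l \<noteq> c" "l \<noteq> b"
        using \<open>L = {a, l}\<close> L_eq L(2) by (auto simp: neighbours_def)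
      moreover have "neighbours E V b = {a, l, c}" using \<open>L = {a, l}\<close> L_eq c_nb_b by auto
      ultimately have "pendant_P3_centre E V a l b c"
        using L(4) aV bV \<open>c \<in> V\<close> \<open>distinct [a, b, c]\<close> nb_a by (simp add: pendant_P3_centre_def)
      then show ?thesis unfolding path3_or_pendant_P3_def by blast
    qed
  qed
qed

lemma tree_mod3_balanced_shape:
  assumes tree: "tree V E" and balanced: "mod3_balanced V E"
  shows "path3_or_pendant_P3 E V"
proof -
  have fin: "finite V" and conn: "connected_graph V E" and ac: "acyclic_graph V E" and lf: "loop_free E"
    using tree graph_loop_free by (auto simp: tree_def graph_def)
  have "V \<noteq> {}" using conn by (simp add: connected_graph_def)
  then obtain a rest where longest: "longest_path E V (a # rest)" using fin longest_path_exists by blast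
  show ?thesis
  proof (cases rest)
    case Nil
    have "neighbours E V a = {}" using longest_path_start_neighbour[OF longest ac lf] Nil by blast
    moreover have "a \<in> V" using longest by (simp add: longest_path_def is_path_Cons)
    ultimately have "{a} = V" by (intro connected_graph_closed_eq[OF conn]) auto
    with balanced show ?thesis by (auto simp: mod3_balanced_def)
  next
    case (Cons b cs)
    show ?thesis using longest unfolding Cons by (rule mod3_balanced_second_vertex_shape[OF tree balanced])
  qed
qed

theorem tree_mod3_balanced_imp_calT:
  "tree V E \<Longrightarrow> mod3_balanced V E \<Longrightarrow> (V, E) \<in> calT"
proof (induction "card V" arbitrary: V E rule: less_induct)
  case less
  have graph: "graph V E" and fin: "finite V" using less.prems(1) by (simp_all add: tree_def graph_def)
  have reduct: "(V - P, edges_within E (V - P)) \<in> calT"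
    if "pendant_at E V P x" "card P = 3" for P x
  proof (rule less.hyps)
    have "P \<noteq> {}" using that(2) by auto
    then show "card (V - P) < card V"
      using that(1) fin by (intro psubset_card_mono) (auto simp: pendant_at_def)
    show "tree (V - P) (edges_within E (V - P))" using less.prems(1) that(1) by (rule tree_Diff_pendant)
    show "mod3_balanced (V - P) (edges_within E (V - P))"
      using fin that less.prems(2) by (rule mod3_balanced_Diff_pendant)
  qed
  consider (path3) a b c where "path3_graph E V a b c"
    | (O1) a b c d where "pendant_P3_end E V a b c d"
    | (O2) a l b c where "pendant_P3_centre E V a l b c"
    using tree_mod3_balanced_shape[OF less.prems] unfolding path3_or_pendant_P3_def by blast
  then show ?case
  proof cases
    case path3
    then show ?thesis using graph by (intro calT_path3_graph)
  next
    case O1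
    have "card {a, b, c} = 3" using O1 by (simp add: pendant_P3_end_def)
    with O1 show ?thesis by (intro calT_pendant_P3_end[OF graph] reduct pendant_P3_end_pendant_at)
  next
    case O2
    have "card {b, a, l} = 3" using O2 by (auto simp: pendant_P3_centre_def)
    with O2 show ?thesis by (intro calT_pendant_P3_centre[OF graph] reduct pendant_P3_centre_pendant_at)
  qed
qed

theorem theorem2:
  fixes V :: "'a set" and E :: "'a set set"
  assumes "tree V E"
  shows "(real (diss V E) = 2 * real (card V) / 3 \<longleftrightarrow> (V, E) \<in> calT)
       \<and> ((V, E) \<in> calT \<longleftrightarrow>
            (card V mod 3 = 0 \<and>
             (\<forall>y\<in>V. card {C \<in> components_minus V E y. card C mod 3 \<noteq> 0} \<le> 2)))"
proof -
  have a_iff_b: "3 * diss V E = 2 * card V \<longleftrightarrow> (V, E) \<in> calT"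
    using assms calT_diss diss_two_thirds_imp_mod3_balanced tree_mod3_balanced_imp_calT by blast
  have b_iff_c: "(V, E) \<in> calT \<longleftrightarrow> mod3_balanced V E"
    using assms calT_diss diss_two_thirds_imp_mod3_balanced tree_mod3_balanced_imp_calT by blast
  have "real (diss V E) = 2 * real (card V) / 3 \<longleftrightarrow> 3 * diss V E = 2 * card V" by linarith
  with a_iff_b b_iff_c show ?thesis by (simp add: mod3_balanced_def nonzero_mod3_components_def)
qed

end
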